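(* Let $N, L$ be positive integers, let $\hat{\mathbf Z}\in\mathbb R^{N\times L}$, let $\mathcal K=\{k_1,\dots,k_K\}\subseteq\{1,\dots,N\}$ be a nonempty index set with complement $\mathcal K^c$, and let $\mathbf x_{\mathcal K}\in\mathbb R^{K}$ be a given vector with nonzero entries. Write $\hat{\mathbf Z}_{\mathcal K}=\mathbf C_{\mathcal K}\hat{\mathbf Z}$ and $\hat{\mathbf Z}_{\mathcal K^c}=\mathbf C_{\mathcal K^c}\hat{\mathbf Z}$. Consider the best rank-one approximation of $\hat{\mathbf Z}$ given $\mathbf x_{\mathcal K}$, i.e. the problem $$\min_{\mathbf x\in\mathbb R^N,\ \mathbf h\in\mathbb R^L}\ \|\hat{\mathbf Z}-\mathbf x\mathbf h^T\|_F^2\quad\text{subject to}\quad \mathbf C_{\mathcal K}\mathbf x=\mathbf x_{\mathcal K}.$$ Then this best rank-one approximation is $$\begin{bmatrix}\hat{\mathbf Z}_{\mathcal K}\\ \hat{\mathbf Z}_{\mathcal K^c}\end{bmatrix}\approx\begin{bmatrix}\mathbf x_{\mathcal K}\\ \hat{\mathbf x}_{\mathcal K^c}\end{bmatrix}\hat{\mathbf h}^T,$$ where $\hat{\mathbf x}_{\mathcal K^c}=\hat{\mathbf Z}_{\mathcal K^c}\hat{\mathbf h}/\|\hat{\mathbf h}\|^2$ and $\hat{\mathbf h}=\big(\check{\mathbf h}^T\hat{\mathbf Z}_{\mathcal K}^T\mathbf x_{\mathcal K}/\|\mathbf x_{\mathcal K}\|^2\big)\check{\mathbf h}$, with $\check{\mathbf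 h}$ being the unit-norm principal eigenvector of $$\hat{\mathbf Z}_{\mathcal K^c}^T\hat{\mathbf Z}_{\mathcal K^c}+\frac{1}{\|\mathbf x_{\mathcal K}\|^2}\hat{\mathbf Z}_{\mathcal K}^T\mathbf x_{\mathcal K}\mathbf x_{\mathcal K}^T\hat{\mathbf Z}_{\mathcal K}.$$
   Context: For an index set $\mathcal A=\{a_1,\dots,a_m\}\subseteq\{1,\dots,N\}$, $\mathbf C_{\mathcal A}\in\{0,1\}^{m\times N}$ denotes the selection matrix whose rows are the canonical vectors $\mathbf e_{a_1}^T,\dots,\mathbf e_{a_m}^T$, so $\mathbf C_{\mathcal A}\mathbf x$ collects the entries of $\mathbf x$ indexed by $\mathcal A$. $\|\cdot\|_F$ is the Frobenius norm and $\|\cdot\|$ the Euclidean norm. (In the paper, $\hat{\mathbf Z}$ is an estimate of the rank-one matrix $\mathbf x\mathbf h^T$ with $\mathbf x$ a graph input signal and $\mathbf h$ graph filter coefficients, and $\mathbf x_{\mathcal K}$ are known nonzero input values.) *)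

theory Defs
  imports "HOL-Analysis.Analysis"
begin

text \<open>Vectors in R^N are real^'n, N x L matrices are real^'l^'n (rows indexed by 'n).
  norm on real^'l^'n is the Frobenius norm.\<close>

text \<open>C_A^T C_A v : keeps the entries of v indexed by A, zeroes the others.
  Norms and products of C_A v are those of this masked vector.\<close>
definition mask_vec :: "'n set \<Rightarrow> real^'n \<Rightarrow> real^'n" where
  "mask_vec A v = (\<chi> i. if i \<in> A then v $ i else 0)"

text \<open>C_A^T C_A Z : keeps the rows of Z indexed by A, zeroes the others.\<close>
definition mask_rows :: "'n set \<Rightarrow> real^'l^'n \<Rightarrow> real^'l^'n" where
  "mask_rows A Z = (\<chi> i. if i \<in> A then Z $ i else 0)"

definition outer :: "real^'n \<Rightarrow> real^'l \<Rightarrow> real^'l^'n" where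
  "outer x h = (\<chi> i j. x $ i * h $ j)"

definition principal_eigvec :: "real^'l^'l \<Rightarrow> real^'l \<Rightarrow> bool" where
  "principal_eigvec M v \<longleftrightarrow> norm v = 1 \<and>
     (\<exists>lam. M *v v = lam *\<^sub>R v \<and>
        (\<forall>\<mu> w. w \<noteq> 0 \<and> M *v w = \<mu> *\<^sub>R w \<longrightarrow> \<mu> \<le> lam))"

end

theory Submission
  imports Defs
begin

text \<open>For fixed \<open>h \<noteq> 0\<close> the objective can be completed to squares:
  \<open>\<parallel>Z - x h\<^sup>T\<parallel>\<^sup>2 = \<parallel>Z\<parallel>\<^sup>2 - h\<^sup>T M h / \<parallel>h\<parallel>\<^sup>2 + (nonnegative squares)\<close>, where \<open>M\<close> is the
  matrix of the statement. The square of a free row \<open>i\<close> vanishes iff \<open>x\<^sub>i = Z\<^sub>i h / \<parallel>h\<parallel>\<^sup>2\<close>;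
  the square of the known block vanishes iff \<open>x\<^sub>K\<^sup>T Z\<^sub>K h = \<parallel>x\<^sub>K\<parallel>\<^sup>2 \<parallel>h\<parallel>\<^sup>2\<close>, which fixes the
  scale of \<open>h\<close>. So the optimal value is \<open>\<parallel>Z\<parallel>\<^sup>2\<close> minus the maximal Rayleigh quotient of the
  symmetric matrix \<open>M\<close>, i.e. minus its largest eigenvalue, and it is attained at the suitably
  scaled principal eigenvector.\<close>

lemma eq_0_if_linear_le_quadratic:
  fixes c d :: real
  assumes "\<And>t. t * c \<le> t\<^sup>2 * d"
  shows "c = 0"
proof -
  define e where "e = \<bar>d\<bar> + 1"
  have e: "e > 0" "d \<le> e - 1" by (auto simp: e_def)
  have "(c / e) * c \<le> (c / e)\<^sup>2 * d" by (rule assms)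
  also have "\<dots> \<le> (c / e)\<^sup>2 * (e - 1)" using e by (intro mult_left_mono) auto
  finally have "c\<^sup>2 * e \<le> c\<^sup>2 * (e - 1)"
    using e by (simp add: power2_eq_square field_simps)
  then have "c\<^sup>2 \<le> 0" by (simp add: algebra_simps)
  then show ?thesis by simp
qed

lemma norm_diff_scaleR_completed_square:
  fixes y h :: "'a::real_inner"
  assumes "h \<noteq> 0"
  shows "(norm (y - c *\<^sub>R h))\<^sup>2
    = (norm y)\<^sup>2 - (y \<bullet> h)\<^sup>2 / (norm h)\<^sup>2 + (norm h)\<^sup>2 * (c - (y \<bullet> h) / (norm h)\<^sup>2)\<^sup>2"
proof -
  have "(norm h)\<^sup>2 > 0" using assms by simp
  moreover have "(norm (y - c *\<^sub>R h))\<^sup>2 = (norm y)\<^sup>2 - 2 * c * (y \<bullet> h) + c\<^sup>2 * (norm h)\<^sup>2"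
    unfolding power2_norm_eq_inner
    by (simp add: inner_diff_left inner_diff_right inner_commute power2_eq_square algebra_simps)
  ultimately show ?thesis
    by (simp add: power2_eq_square field_simps)
qed

lemma symmetric_matrix_inner_commute:
  fixes M :: "real^'n^'n"
  assumes "transpose M = M"
  shows "v \<bullet> (M *v w) = w \<bullet> (M *v v)"
  by (metis assms dot_lmul_matrix inner_commute transpose_matrix_vector)

text \<open>At a maximiser \<open>u\<close> of the Rayleigh quotient, moving along \<open>v = M u - (u \<bullet> M u) u\<close>
  changes the quotient to first order by a multiple of \<open>v \<bullet> v\<close>, which must therefore vanish.\<close>
lemma symmetric_matrix_rayleigh_max_eigenvector:
  fixes M :: "real^'n^'n"
  assumes sym: "transpose M = M" and u: "u \<bullet> u = 1"
    and max: "\<And>y. y \<bullet> (M *v y) \<le> (u \<bullet> (M *v u)) * (y \<bullet> y)"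
  shows "M *v u = (u \<bullet> (M *v u)) *\<^sub>R u"
proof -
  define \<mu> where "\<mu> = u \<bullet> (M *v u)"
  define v where "v = M *v u - \<mu> *\<^sub>R u"
  have v_Mu: "v \<bullet> (M *v u) = v \<bullet> v + \<mu> * (u \<bullet> v)"
    by (simp add: v_def inner_diff_left inner_diff_right inner_commute algebra_simps)
  have "t * (2 * (v \<bullet> v)) \<le> t\<^sup>2 * (\<mu> * (v \<bullet> v) - v \<bullet> (M *v v))" for t
  proof -
    have "(u + t *\<^sub>R v) \<bullet> (M *v (u + t *\<^sub>R v)) \<le> \<mu> * ((u + t *\<^sub>R v) \<bullet> (u + t *\<^sub>R v))"
      unfolding \<mu>_def by (rule max)
    then show ?thesis
      using u v_Mu symmetric_matrix_inner_commute[OF sym, of u v]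
      by (simp add: \<mu>_def matrix_vector_right_distrib matrix_vector_mult_scaleR inner_add_left
          inner_add_right inner_commute power2_eq_square algebra_simps)
  qed
  then have "2 * (v \<bullet> v) = 0" by (rule eq_0_if_linear_le_quadratic)
  then show ?thesis by (simp add: v_def \<mu>_def)
qed

lemma quadratic_form_maximiser_on_sphere:
  fixes M :: "real^'n^'n"
  obtains u where "u \<bullet> u = 1" and "\<And>y. y \<bullet> (M *v y) \<le> (u \<bullet> (M *v u)) * (y \<bullet> y)"
proof -
  define q where "q = (\<lambda>w. w \<bullet> (M *v w))"
  have "continuous_on (sphere 0 1) q"
    unfolding q_def by (intro continuous_intros linear_continuous_on matrix_vector_mul_bounded_linear)
  moreover have "sphere (0::real^'n) 1 \<noteq> {}"
    using norm_axis_1 by (metis mem_sphere_0 empty_iff)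
  ultimately obtain u where u: "norm u = 1" and umax: "\<And>y. norm y = 1 \<Longrightarrow> q y \<le> q u"
    using continuous_attains_sup[OF compact_sphere] by (metis mem_sphere_0)
  have "q y \<le> q u * (y \<bullet> y)" for y
  proof (cases "y = 0")
    case False
    then have "q ((1 / norm y) *\<^sub>R y) \<le> q u" by (intro umax) simp
    then show ?thesis
      using False by (simp add: q_def matrix_vector_mult_scaleR power2_norm_eq_inner[symmetric]
          power2_eq_square field_simps)
  qed (simp add: q_def)
  moreover have "u \<bullet> u = 1" using u by (simp add: power2_norm_eq_inner[symmetric])
  ultimately show thesis using that by (simp add: q_def)
qed

lemma principal_eigvec_rayleigh_bound:
  fixes M :: "real^'n^'n"
  assumes sym: "transpose M = M" and v: "principal_eigvec M v"
  shows "w \<bullet> (M *v w) \<le> (v \<bullet> (M *v v)) * (w \<bullet> w)"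
proof -
  obtain lam where vv: "v \<bullet> v = 1" and eig: "M *v v = lam *\<^sub>R v"
    and lam_max: "\<And>\<mu> w. w \<noteq> 0 \<Longrightarrow> M *v w = \<mu> *\<^sub>R w \<Longrightarrow> \<mu> \<le> lam"
    using v unfolding principal_eigvec_def power2_norm_eq_inner[symmetric] by auto
  obtain u where uu: "u \<bullet> u = 1" and umax: "\<And>y. y \<bullet> (M *v y) \<le> (u \<bullet> (M *v u)) * (y \<bullet> y)"
    using quadratic_form_maximiser_on_sphere[of M] by blast
  have "u \<noteq> 0" using uu by auto
  then have "u \<bullet> (M *v u) \<le> lam"
    using lam_max symmetric_matrix_rayleigh_max_eigenvector[OF sym uu umax] by blast
  then have "w \<bullet> (M *v w) \<le> lam * (w \<bullet> w)"
    using umax[of w] by (meson inner_ge_zero mult_right_mono order_trans)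
  then show ?thesis using eig vv by simp
qed

lemma norm_power2_vec_rows:
  fixes A :: "'a::real_inner^'n"
  shows "(norm A)\<^sup>2 = (\<Sum>i\<in>UNIV. (norm (A $ i))\<^sup>2)"
  by (simp add: power2_norm_eq_inner inner_vec_def)

lemma norm_power2_mask_rows_split:
  "(norm A)\<^sup>2 = (norm (mask_rows K A))\<^sup>2 + (\<Sum>i\<in>-K. (norm (A $ i))\<^sup>2)"
proof -
  have "(norm (mask_rows K A))\<^sup>2 = (\<Sum>i\<in>K. (norm (A $ i))\<^sup>2)"
    unfolding norm_power2_vec_rows[of "mask_rows K A"]
    by (simp add: mask_rows_def if_distrib[of "\<lambda>v. (norm v)\<^sup>2"] sum.If_cases)
  then show ?thesis
    unfolding norm_power2_vec_rows[of A]
    using sum.subset_diff[of K UNIV] by (simp add: Compl_eq_Diff_UNIV add.commute)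
qed

lemma outer_row: "outer x h $ i = x $ i *\<^sub>R h"
  by (simp add: outer_def vec_eq_iff)

lemma mask_rows_diff_outer:
  "mask_rows K (Z - outer x h) = mask_rows K Z - outer (mask_vec K x) h"
  by (simp add: mask_rows_def mask_vec_def outer_def vec_eq_iff)

lemma inner_outer: "Y \<bullet> outer x h = (transpose Y *v x) \<bullet> h"
proof -
  have "Y \<bullet> outer x h = (\<Sum>i\<in>UNIV. (x $ i *\<^sub>R Y $ i) \<bullet> h)"
    by (simp add: inner_vec_def[of Y] outer_row)
  also have "\<dots> = (transpose Y *v x) \<bullet> h"
    by (simp add: matrix_vector_column scalar_mult_eq_scaleR inner_sum_left)
  finally show ?thesis .
qed

lemma norm_outer: "norm (outer x h) = norm x * norm h"
proof -
  have "(norm (outer x h))\<^sup>2 = (\<Sum>i\<in>UNIV. (x $ i)\<^sup>2) * (norm h)\<^sup>2"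
    unfolding norm_power2_vec_rows[of "outer x h"]
    by (simp add: outer_row power_mult_distrib sum_distrib_right)
  also have "\<dots> = (norm x)\<^sup>2 * (norm h)\<^sup>2"
    unfolding norm_power2_vec_rows[of x] by simp
  finally show ?thesis
    by (metis power_mult_distrib norm_ge_zero mult_nonneg_nonneg power2_eq_iff_nonneg)
qed

lemma outer_mult_vector: "outer x h *v w = (h \<bullet> w) *\<^sub>R x"
  by (simp add: vec_eq_iff matrix_vector_mult_def outer_def inner_vec_def sum_distrib_left mult_ac)

lemma mask_rows_mult_vector_component:
  "(mask_rows K Z *v w) $ i = (if i \<in> K then Z $ i \<bullet> w else 0)"
  by (simp add: matrix_vector_mul_component mask_rows_def)

lemma mask_vec_eq_iff: "mask_vec K x = mask_vec K y \<longleftrightarrow> (\<forall>k\<in>K. x $ k = y $ k)"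
  by (auto simp: mask_vec_def vec_eq_iff)

text \<open>Applied to \<open>y = mask_vec K xK\<close>, the paper's \<open>C\<^sub>K\<^sup>T x\<^sub>K\<close>, \<open>known_corr\<close> is
  \<open>Z\<^sub>K\<^sup>T x\<^sub>K\<close> and \<open>fit_matrix\<close> is the matrix of the statement.\<close>

definition known_corr :: "'n set \<Rightarrow> real^'l^'n \<Rightarrow> real^'n \<Rightarrow> real^'l" where
  "known_corr K Z y = transpose (mask_rows K Z) *v y"

definition fit_matrix :: "'n set \<Rightarrow> real^'l^'n \<Rightarrow> real^'n \<Rightarrow> real^'l^'l" where
  "fit_matrix K Z y = transpose (mask_rows (- K) Z) ** mask_rows (- K) Z
     + (1 / (norm y)\<^sup>2) *\<^sub>R outer (known_corr K Z y) (known_corr K Z y)"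

lemma transpose_fit_matrix: "transpose (fit_matrix K Z y) = fit_matrix K Z y"
  by (simp add: fit_matrix_def transpose_def outer_def matrix_matrix_mult_def vec_eq_iff mult_ac)

lemma inner_fit_matrix:
  "w \<bullet> (fit_matrix K Z y *v w)
     = (\<Sum>i\<in>-K. (Z $ i \<bullet> w)\<^sup>2) + (known_corr K Z y \<bullet> w)\<^sup>2 / (norm y)\<^sup>2"
proof -
  have "w \<bullet> (transpose (mask_rows (- K) Z) *v (mask_rows (- K) Z *v w))
      = (norm (mask_rows (- K) Z *v w))\<^sup>2"
    by (metis dot_lmul_matrix inner_commute power2_norm_eq_inner transpose_matrix_vector)
  also have "\<dots> = (\<Sum>i\<in>-K. (Z $ i \<bullet> w)\<^sup>2)"
    unfolding norm_power2_vec_rows mask_rows_mult_vector_component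
    by (simp add: if_distrib[of "\<lambda>r. r\<^sup>2"] sum.If_cases Compl_eq)
  finally show ?thesis
    by (simp add: fit_matrix_def matrix_vector_mult_add_rdistrib matrix_vector_mul_assoc[symmetric]
        scaleR_matrix_vector_assoc[symmetric] outer_mult_vector inner_add_right power2_eq_square
        inner_commute)
qed

lemma fit_matrix_nonneg: "0 \<le> w \<bullet> (fit_matrix K Z y *v w)"
  unfolding inner_fit_matrix by (intro add_nonneg_nonneg sum_nonneg) auto

lemma norm_diff_outer_completed_square:
  fixes Z :: "real^'l^'n"
  assumes h: "h \<noteq> 0" and x: "mask_vec K x \<noteq> 0"
  shows "(norm (Z - outer x h))\<^sup>2
     = (norm Z)\<^sup>2 - h \<bullet> (fit_matrix K Z (mask_vec K x) *v h) / (norm h)\<^sup>2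
     + (norm (mask_vec K x) * norm h)\<^sup>2
         * (1 - known_corr K Z (mask_vec K x) \<bullet> h / (norm (mask_vec K x) * norm h)\<^sup>2)\<^sup>2
     + (\<Sum>i\<in>-K. (norm h)\<^sup>2 * (x $ i - Z $ i \<bullet> h / (norm h)\<^sup>2)\<^sup>2)"
proof -
  define B where "B = outer (mask_vec K x) h"
  have B: "norm B = norm (mask_vec K x) * norm h"
    "mask_rows K Z \<bullet> B = known_corr K Z (mask_vec K x) \<bullet> h"
    by (simp_all add: B_def norm_outer inner_outer known_corr_def)
  have "B \<noteq> 0"
    using h x by (metis B(1) mult_eq_0_iff norm_eq_zero)
  \<comment> \<open>The known rows are fitted jointly, as one Frobenius vector with fixed coefficient 1 on \<open>B\<close>.\<close>
  have known: "(norm (mask_rows K (Z - outer x h)))\<^sup>2 = (norm (mask_rows K Z))\<^sup>2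
      - (known_corr K Z (mask_vec K x) \<bullet> h)\<^sup>2 / (norm B)\<^sup>2
      + (norm B)\<^sup>2 * (1 - known_corr K Z (mask_vec K x) \<bullet> h / (norm B)\<^sup>2)\<^sup>2"
    using norm_diff_scaleR_completed_square[OF \<open>B \<noteq> 0\<close>, of "mask_rows K Z" 1]
    by (simp add: mask_rows_diff_outer B_def[symmetric] B(2))
  have unknown: "(norm ((Z - outer x h) $ i))\<^sup>2 = (norm (Z $ i))\<^sup>2 - (Z $ i \<bullet> h)\<^sup>2 / (norm h)\<^sup>2
      + (norm h)\<^sup>2 * (x $ i - Z $ i \<bullet> h / (norm h)\<^sup>2)\<^sup>2" for i
    using norm_diff_scaleR_completed_square[OF h] by (simp add: outer_row)
  have unknown_rows: "(\<Sum>i\<in>-K. (norm ((Z - outer x h) $ i))\<^sup>2)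
      = (\<Sum>i\<in>-K. (norm (Z $ i))\<^sup>2) - (\<Sum>i\<in>-K. (Z $ i \<bullet> h)\<^sup>2) / (norm h)\<^sup>2
        + (\<Sum>i\<in>-K. (norm h)\<^sup>2 * (x $ i - Z $ i \<bullet> h / (norm h)\<^sup>2)\<^sup>2)"
    unfolding unknown by (simp add: sum.distrib sum_subtractf sum_divide_distrib)
  have "h \<bullet> (fit_matrix K Z (mask_vec K x) *v h) / (norm h)\<^sup>2
      = (\<Sum>i\<in>-K. (Z $ i \<bullet> h)\<^sup>2) / (norm h)\<^sup>2 + (known_corr K Z (mask_vec K x) \<bullet> h)\<^sup>2 / (norm B)\<^sup>2"
    unfolding inner_fit_matrix B(1) by (simp add: add_divide_distrib power_mult_distrib)
  then show ?thesis
    unfolding norm_power2_mask_rows_split[of "Z - outer x h" K] norm_power2_mask_rows_split[of Z K]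
      known unknown_rows B(1)[symmetric]
    by simp
qed

lemma rank_one_fit_lower_bound:
  assumes v: "principal_eigvec (fit_matrix K Z (mask_vec K x)) v" and x: "mask_vec K x \<noteq> 0"
  shows "(norm Z)\<^sup>2 - v \<bullet> (fit_matrix K Z (mask_vec K x) *v v) \<le> (norm (Z - outer x h))\<^sup>2"
proof (cases "h = 0")
  case True
  then have "outer x h = 0" by (simp add: outer_def vec_eq_iff)
  then show ?thesis using fit_matrix_nonneg[of v K Z "mask_vec K x"] by simp
next
  case False
  let ?M = "fit_matrix K Z (mask_vec K x)"
  have "h \<bullet> (?M *v h) \<le> v \<bullet> (?M *v v) * (norm h)\<^sup>2"
    using principal_eigvec_rayleigh_bound[OF transpose_fit_matrix v]
    by (simp add: power2_norm_eq_inner)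
  then have "h \<bullet> (?M *v h) / (norm h)\<^sup>2 \<le> v \<bullet> (?M *v v)"
    using False by (simp add: divide_le_eq)
  then show ?thesis
    using norm_diff_outer_completed_square[OF False x, of Z]
    by (smt (verit) sum_nonneg mult_nonneg_nonneg zero_le_power2)
qed

lemma rank_one_fit_attained:
  assumes v: "principal_eigvec (fit_matrix K Z (mask_vec K x)) v" and x: "mask_vec K x \<noteq> 0"
    and h: "h = ((v \<bullet> known_corr K Z (mask_vec K x)) / (norm (mask_vec K x))\<^sup>2) *\<^sub>R v"
    and h0: "h \<noteq> 0" and x_unknown: "\<forall>i\<in>-K. x $ i = (Z *v h) $ i / (norm h)\<^sup>2"
  shows "(norm (Z - outer x h))\<^sup>2 = (norm Z)\<^sup>2 - v \<bullet> (fit_matrix K Z (mask_vec K x) *v v)"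
proof -
  define t where "t = (v \<bullet> known_corr K Z (mask_vec K x)) / (norm (mask_vec K x))\<^sup>2"
  have h_t: "h = t *\<^sub>R v" unfolding h t_def ..
  have "norm v = 1" using v by (simp add: principal_eigvec_def)
  then have norm_h: "(norm h)\<^sup>2 = t\<^sup>2" by (simp add: h_t power_mult_distrib)
  have "t \<noteq> 0" using h0 h_t by auto
  have "h \<bullet> (fit_matrix K Z (mask_vec K x) *v h) / (norm h)\<^sup>2
      = v \<bullet> (fit_matrix K Z (mask_vec K x) *v v)"
    using \<open>t \<noteq> 0\<close> unfolding norm_h
    by (simp add: h_t matrix_vector_mult_scaleR power2_eq_square)
  moreover have "known_corr K Z (mask_vec K x) \<bullet> h = (norm (mask_vec K x) * norm h)\<^sup>2"
    using x unfolding power_mult_distrib norm_h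
    by (simp add: h_t t_def inner_commute power2_eq_square)
  moreover have "(\<Sum>i\<in>-K. (norm h)\<^sup>2 * (x $ i - Z $ i \<bullet> h / (norm h)\<^sup>2)\<^sup>2) = 0"
    using x_unknown by (simp add: matrix_vector_mul_component)
  ultimately show ?thesis
    using norm_diff_outer_completed_square[OF h0 x, of Z] by simp
qed

theorem proposition1:
  fixes Z :: "real^'l^'n" and K :: "'n set" and xK :: "real^'n"
    and hc hh :: "real^'l" and xh :: "real^'n"
  assumes K_ne: "K \<noteq> {}"
    and xK_nz: "\<forall>k\<in>K. xK $ k \<noteq> 0"
    and hc: "principal_eigvec
       (transpose (mask_rows (- K) Z) ** mask_rows (- K) Z
        + (1 / (norm (mask_vec K xK))\<^sup>2) *\<^sub>R
            outer (transpose (mask_rows K Z) *v mask_vec K xK)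
                  (transpose (mask_rows K Z) *v mask_vec K xK)) hc"
    and hh: "hh = ((hc \<bullet> (transpose (mask_rows K Z) *v mask_vec K xK))
                    / (norm (mask_vec K xK))\<^sup>2) *\<^sub>R hc"
    and hh_nz: "hh \<noteq> 0"
    and xh: "xh = (\<chi> i. if i \<in> K then xK $ i else (Z *v hh) $ i / (norm hh)\<^sup>2)"
  shows "(\<forall>k\<in>K. xh $ k = xK $ k) \<and>
         (\<forall>x h. (\<forall>k\<in>K. x $ k = xK $ k) \<longrightarrow>
            (norm (Z - outer xh hh))\<^sup>2 \<le> (norm (Z - outer x h))\<^sup>2)"
proof -
  have v: "principal_eigvec (fit_matrix K Z (mask_vec K xK)) hc"
    using hc unfolding fit_matrix_def known_corr_def .
  have xK0: "mask_vec K xK \<noteq> 0"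
    using K_ne xK_nz by (auto simp: mask_vec_def vec_eq_iff)
  have xh_K: "\<forall>k\<in>K. xh $ k = xK $ k" by (simp add: xh)
  then have "mask_vec K xh = mask_vec K xK" by (simp add: mask_vec_eq_iff)
  then have "(norm (Z - outer xh hh))\<^sup>2 = (norm Z)\<^sup>2 - hc \<bullet> (fit_matrix K Z (mask_vec K xK) *v hc)"
    using rank_one_fit_attained[of K Z xh hc hh] v xK0 hh hh_nz xh by (simp add: known_corr_def)
  moreover have
    "(norm Z)\<^sup>2 - hc \<bullet> (fit_matrix K Z (mask_vec K xK) *v hc) \<le> (norm (Z - outer x h))\<^sup>2"
    if "\<forall>k\<in>K. x $ k = xK $ k" for x h
    using rank_one_fit_lower_bound[of K Z x hc h] that v xK0
    by (simp add: mask_vec_eq_iff[symmetric])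
  ultimately show ?thesis using xh_K by simp
qed

end
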